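(* Let $\Phi=\forall u_1\ldots\forall u_n\exists e_1(D_1)\ldots\exists e_m(D_m).\varphi$ be a DQBF. In any run of Algorithm 1 (as described in the context) on $\Phi$, for each clause $C$ added to the clause set $\mathcal{C}$ in Phase 2, some clause $C'\subseteq C$ (reading each arbiter variable $e^\sigma$ as the annotated variable $e^\sigma$) is derivable from $\Phi$ in the $\forall$Exp+Res calculus.
   Context: For a set $V$ of variables, $[V]$ is the set of assignments $V\to\{\textsc{true},\textsc{false}\}$; assignments are identified with terms of the literals they make true, $\neg\sigma$ is the clause of the negations of these literals, and $\sigma|_W$ denotes restriction. A DQBF is $\Phi=\forall u_1\ldots\forall u_n\exists e_1(D_1)\ldots\exists e_m(D_m).\varphi$ with pairwise distinct variables, $U=\{u_i\}$, $E=\{e_j\}$, dependency sets $D(e_j)=D_j\subseteq U$, $\varphi$ a CNF over $U\cup E$. A definition of a variable $x$ by a set $X$ in a formula $\chi$ is a formula $\psi$ with $\mathit{var}(\psi)\subseteq X$ such that every satisfying assignment $\lambda$ of $\chi$ has $\lambda(x)=\psi[\lambda]$. Arbiter variables $e^\sigma$ ($e\in E$, $\sigma\in[D(e)]$) are fresh variables. Algorithm 1. Phase 1: set $A=\emptyset$, $\varphi_A=\emptyset$, $\psi_{\mathit{Def}}=$ empty conjunction. For $i=1,\dots,m$: while $e_i$ has no definition by $A\cup D_i$ in $\varphi\wedge\varphi_A$, choose $\xi\in[D_i\cup A]$ such that both $\varphi\wedge\varphi_A\wedge\xi\wedge e_i$ and $\varphi\wedge\varphi_A\wedge\xi\wedge\neg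 e_i$ are satisfiable, let $\sigma=\xi|_{D_i}$, add $e_i^\sigma$ to $A$ and the clauses $(e_i^\sigma\vee\neg\sigma\vee\neg e_i)$, $(\neg e_i^\sigma\vee\neg\sigma\vee e_i)$ to $\varphi_A$. Then choose a definition $\psi^i$ of $e_i$ by $A\cup D_i$ in $\varphi\wedge\varphi_A$ and conjoin $(e_i\leftrightarrow\psi^i)$ to $\psi_{\mathit{Def}}$. Phase 2: let $\tau\in[A]$ set all arbiter variables true, $\mathcal{C}=\emptyset$. Repeat: if $\neg\varphi\wedge\psi_{\mathit{Def}}\wedge\tau$ is unsatisfiable, return TRUE; otherwise choose a satisfying assignment $\sigma$ of it, choose a subset $\rho$ of the literals of $\tau\wedge\sigma|_U$ with $\varphi\wedge\varphi_A\wedge\rho$ unsatisfiable, add the clause $\neg(\rho|_A)$ to $\mathcal{C}$; if $\mathcal{C}$ is satisfiable, let $\tau\in[A]$ satisfy $\mathcal{C}$ and repeat, else return FALSE. The $\forall$Exp+Res calculus for $\Phi$ works on clauses over annotated variables $x^\tau$ ($x\in E$, $\tau\in[D(x)]$; different annotations give different variables; $\ell^\tau$ is the literal on $\mathit{var}(\ell)^\tau$ with the polarity of $\ell$) with rules: (axiom) for any $C\in\varphi$ and any $\sigma\in[U]$ falsifying every universal literal of $C$, derive $\{\ell^{\sigma|_{D(\mathit{var}(\ell))}}\mid\ell\in C,\ \mathit{var}(\ell)\in E\}$; (resolution) from $C_1\cup\{x^\tau\}$ and $C_2\cup\{\neg x^\tau\}$ derive $C_1\cup C_2$. A clause is derivable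 if it ends a finite sequence of clauses each obtained by a rule from earlier ones. *)

theory Defs
  imports Main
begin

text \<open>An arbiter variable e^sigma is represented as Ann e sigma;
  the same constructor is used for the annotated variables of the
  forall-Exp+Res calculus, so that reading an arbiter variable as an annotated
  variable is the identity.\<close>
datatype 'v var = Orig 'v | Ann 'v "'v \<rightharpoonup> bool"

datatype 'x lit = Pos 'x | Neg 'x

fun lvar :: "'x lit \<Rightarrow> 'x" where
  "lvar (Pos x) = x" | "lvar (Neg x) = x"

fun lneg :: "'x lit \<Rightarrow> 'x lit" where
  "lneg (Pos x) = Neg x" | "lneg (Neg x) = Pos x"

fun lholds :: "('x \<Rightarrow> bool) \<Rightarrow> 'x lit \<Rightarrow> bool" where
  "lholds lam (Pos x) = lam x" | "lholds lam (Neg x) = (\<not> lam x)"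

text \<open>Partial assignment (an element of [V] when its domain is V) holding a literal.\<close>
fun pholds :: "('x \<rightharpoonup> bool) \<Rightarrow> 'x lit \<Rightarrow> bool" where
  "pholds \<sigma> (Pos x) = (\<sigma> x = Some True)" | "pholds \<sigma> (Neg x) = (\<sigma> x = Some False)"

definition term_of :: "('x \<rightharpoonup> bool) \<Rightarrow> 'x lit set" where
  "term_of \<sigma> = {l. pholds \<sigma> l}"

definition term_on :: "('x \<Rightarrow> bool) \<Rightarrow> 'x set \<Rightarrow> 'x lit set" where
  "term_on lam V = {l. lvar l \<in> V \<and> lholds lam l}"

definition neg_term :: "'x lit set \<Rightarrow> 'x lit set" where
  "neg_term T = lneg ` T"

definition models :: "('x \<Rightarrow> bool) \<Rightarrow> 'x lit set set \<Rightarrow> bool" where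
  "models lam F = (\<forall>C\<in>F. \<exists>l\<in>C. lholds lam l)"

definition term_holds :: "('x \<Rightarrow> bool) \<Rightarrow> 'x lit set \<Rightarrow> bool" where
  "term_holds lam T = (\<forall>l\<in>T. lholds lam l)"

definition sat_with :: "'x lit set set \<Rightarrow> 'x lit set \<Rightarrow> bool" where
  "sat_with F T = (\<exists>lam. models lam F \<and> term_holds lam T)"

datatype 'x form = FTrue | FFalse | FVar 'x | FNot "'x form"
  | FAnd "'x form" "'x form" | FOr "'x form" "'x form"

fun eval :: "'x form \<Rightarrow> ('x \<Rightarrow> bool) \<Rightarrow> bool" where
  "eval FTrue lam = True"
| "eval FFalse lam = False"
| "eval (FVar x) lam = lam x"
| "eval (FNot f) lam = (\<not> eval f lam)"
| "eval (FAnd f g) lam = (eval f lam \<and> eval g lam)"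
| "eval (FOr f g) lam = (eval f lam \<or> eval g lam)"

fun fvars :: "'x form \<Rightarrow> 'x set" where
  "fvars FTrue = {}"
| "fvars FFalse = {}"
| "fvars (FVar x) = {x}"
| "fvars (FNot f) = fvars f"
| "fvars (FAnd f g) = fvars f \<union> fvars g"
| "fvars (FOr f g) = fvars f \<union> fvars g"

definition is_definition :: "'x lit set set \<Rightarrow> 'x \<Rightarrow> 'x set \<Rightarrow> 'x form \<Rightarrow> bool" where
  "is_definition \<chi> x X \<psi> =
     (fvars \<psi> \<subseteq> X \<and> (\<forall>lam. models lam \<chi> \<longrightarrow> lam x = eval \<psi> lam))"

text \<open>A DQBF forall U exists e_1(D e_1) ... e_m(D e_m). phi, with the existential
  variables listed (in order) by es and phi a CNF over U \<union> set es.\<close>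
definition dqbf :: "'v set \<Rightarrow> 'v list \<Rightarrow> ('v \<Rightarrow> 'v set) \<Rightarrow> 'v lit set set \<Rightarrow> bool" where
  "dqbf U es D \<phi> =
     (finite U \<and> distinct es \<and> set es \<inter> U = {} \<and> (\<forall>e\<in>set es. D e \<subseteq> U)
      \<and> finite \<phi> \<and> (\<forall>C\<in>\<phi>. finite C \<and> (\<forall>l\<in>C. lvar l \<in> U \<union> set es)))"

definition lift_cnf :: "'v lit set set \<Rightarrow> 'v var lit set set" where
  "lift_cnf \<phi> = (\<lambda>C. map_lit Orig ` C) ` \<phi>"

definition arbiter_clauses :: "'v \<Rightarrow> ('v \<rightharpoonup> bool) \<Rightarrow> 'v var lit set set" where
  "arbiter_clauses e s =
     { {Pos (Ann e s), Neg (Orig e)} \<union> neg_term (map_lit Orig ` term_of s),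
       {Neg (Ann e s), Pos (Orig e)} \<union> neg_term (map_lit Orig ` term_of s) }"

text \<open>phase1 U es D phi i A phiA defs: a state reachable in Phase 1, where the loop
  is currently treating e_(i+1) (0-based index i), A is the set of arbiter
  variables, phiA the arbiter clauses and defs the list of chosen definitions
  psi^1, ..., psi^i.\<close>
inductive phase1 :: "'v set \<Rightarrow> 'v list \<Rightarrow> ('v \<Rightarrow> 'v set) \<Rightarrow> 'v lit set set
    \<Rightarrow> nat \<Rightarrow> 'v var set \<Rightarrow> 'v var lit set set \<Rightarrow> 'v var form list \<Rightarrow> bool"
  for U es D \<phi> where
  init: "phase1 U es D \<phi> 0 {} {} []"
| arb: "\<lbrakk> phase1 U es D \<phi> i A FA ds; i < length es;
         \<not> (\<exists>\<psi>. is_definition (lift_cnf \<phi> \<union> FA) (Orig (es!i)) (Orig ` D (es!i) \<union> A) \<psi>);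
         dom \<xi> = Orig ` D (es!i) \<union> A;
         sat_with (lift_cnf \<phi> \<union> FA) (insert (Pos (Orig (es!i))) (term_of \<xi>));
         sat_with (lift_cnf \<phi> \<union> FA) (insert (Neg (Orig (es!i))) (term_of \<xi>));
         \<sigma> = (\<xi> \<circ> Orig) |` D (es!i) \<rbrakk>
       \<Longrightarrow> phase1 U es D \<phi> i (insert (Ann (es!i) \<sigma>) A) (FA \<union> arbiter_clauses (es!i) \<sigma>) ds"
| def: "\<lbrakk> phase1 U es D \<phi> i A FA ds; i < length es;
         is_definition (lift_cnf \<phi> \<union> FA) (Orig (es!i)) (Orig ` D (es!i) \<union> A) \<psi> \<rbrakk>
       \<Longrightarrow> phase1 U es D \<phi> (Suc i) A FA (ds @ [\<psi>])"

definition psi_def_holds :: "'v list \<Rightarrow> 'v var form list \<Rightarrow> ('v var \<Rightarrow> bool) \<Rightarrow> bool" where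
  "psi_def_holds es ds lam = (\<forall>j<length es. lam (Orig (es!j)) = eval (ds!j) lam)"

definition phase2_clause :: "'v set \<Rightarrow> 'v list \<Rightarrow> 'v lit set set
    \<Rightarrow> 'v var set \<Rightarrow> 'v var lit set set \<Rightarrow> 'v var form list
    \<Rightarrow> ('v var \<rightharpoonup> bool) \<Rightarrow> 'v var lit set \<Rightarrow> bool" where
  "phase2_clause U es \<phi> A FA ds \<tau> K =
     (\<exists>lam \<rho>. \<not> models lam (lift_cnf \<phi>) \<and> psi_def_holds es ds lam \<and> term_holds lam (term_of \<tau>)
        \<and> \<rho> \<subseteq> term_of \<tau> \<union> term_on lam (Orig ` U)
        \<and> \<not> sat_with (lift_cnf \<phi> \<union> FA) \<rho>
        \<and> K = neg_term {l \<in> \<rho>. lvar l \<in> A})"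

text \<open>States (tau, C) reached at the beginning of an iteration of the Phase 2 loop.\<close>
inductive phase2 :: "'v set \<Rightarrow> 'v list \<Rightarrow> 'v lit set set
    \<Rightarrow> 'v var set \<Rightarrow> 'v var lit set set \<Rightarrow> 'v var form list
    \<Rightarrow> ('v var \<rightharpoonup> bool) \<Rightarrow> 'v var lit set set \<Rightarrow> bool"
  for U es \<phi> A FA ds where
  init: "phase2 U es \<phi> A FA ds (\<lambda>x. if x \<in> A then Some True else None) {}"
| step: "\<lbrakk> phase2 U es \<phi> A FA ds \<tau> C; phase2_clause U es \<phi> A FA ds \<tau> K;
          dom \<tau>' = A; \<forall>K'\<in>insert K C. \<exists>l\<in>K'. pholds \<tau>' l \<rbrakk>
        \<Longrightarrow> phase2 U es \<phi> A FA ds \<tau>' (insert K C)"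

definition ann_lit :: "'v lit \<Rightarrow> ('v \<rightharpoonup> bool) \<Rightarrow> 'v var lit" where
  "ann_lit l \<tau> = map_lit (\<lambda>x. Ann x \<tau>) l"

inductive expres_derivable :: "'v set \<Rightarrow> 'v list \<Rightarrow> ('v \<Rightarrow> 'v set) \<Rightarrow> 'v lit set set
    \<Rightarrow> 'v var lit set \<Rightarrow> bool"
  for U es D \<phi> where
  axiom: "\<lbrakk> C \<in> \<phi>; dom \<sigma> = U; \<forall>l\<in>C. lvar l \<in> U \<longrightarrow> pholds \<sigma> (lneg l) \<rbrakk>
          \<Longrightarrow> expres_derivable U es D \<phi>
                {ann_lit l (\<sigma> |` D (lvar l)) | l. l \<in> C \<and> lvar l \<in> set es}"
| res: "\<lbrakk> expres_derivable U es D \<phi> (C1 \<union> {Pos x}); expres_derivable U es D \<phi> (C2 \<union> {Neg x}) \<rbrakk>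
        \<Longrightarrow> expres_derivable U es D \<phi> (C1 \<union> C2)"

end

theory Submission imports Defs begin

text \<open>Let \<open>lam\<close> be the assignment of the Phase 2 iteration, \<open>\<sigma>\<close> its restriction to the
  universal variables and \<open>T\<close> the arbiter literals of \<open>\<rho>\<close>, so that the added clause is \<open>\<not>T\<close>.
  The \<open>\<forall>\<close>Exp+Res axioms at \<open>\<sigma>\<close> are unsatisfiable together with \<open>T\<close>: from a model \<open>\<mu>\<close> of
  both, keep \<open>lam\<close> on the universal variables, \<open>\<mu>\<close> on the arbiter variables, and give each
  existential \<open>e\<close> the value of \<open>e\<^bsup>\<sigma>|D(e)\<^esup>\<close>.  This satisfies \<open>\<phi>\<close> and \<open>\<rho>\<close>, and also \<open>\<phi>\<^sub>A\<close>: the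
  arbiter clauses of \<open>e\<^sup>s\<close> are satisfied through \<open>\<not>s\<close> unless \<open>s = \<sigma>|D(e)\<close>, and then they read
  \<open>e \<leftrightarrow> e\<^sup>s\<close>.  This contradicts the choice of \<open>\<rho>\<close>.  Since \<open>T\<close> is consistent, resolving the
  axioms on the variables not fixed by \<open>T\<close> (splitting on each of them in turn) derives a clause
  contained in \<open>\<not>T\<close>.\<close>

lemma neg_term_insert: "neg_term (insert l T) = insert (lneg l) (neg_term T)"
  by (simp add: neg_term_def)

lemma lneg_lneg [simp]: "lneg (lneg l) = l"
  by (cases l) simp_all

lemma lholds_cong: "f (lvar l) = g (lvar l) \<Longrightarrow> lholds f l = lholds g l"
  by (cases l) simp_all

lemma not_sat_with_insert: "\<not> sat_with S T \<Longrightarrow> \<not> sat_with S (insert l T)"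
  by (auto simp: sat_with_def term_holds_def)

lemma sat_with_insert_fresh:
  assumes "sat_with {} T" and "Pos (lvar l) \<notin> T" and "Neg (lvar l) \<notin> T"
  shows "sat_with {} (insert l T)"
proof -
  obtain lam where lam: "term_holds lam T"
    using assms(1) by (auto simp: sat_with_def)
  let ?lam' = "lam(lvar l := lholds (\<lambda>_. True) l)"
  have "lholds ?lam' l" by (cases l) simp_all
  moreover have "lholds ?lam' l'" if "l' \<in> T" for l'
  proof -
    have "lvar l' \<noteq> lvar l" using that assms(2,3) by (cases l') auto
    then show ?thesis using lam that lholds_cong[of ?lam' l' lam] by (simp add: term_holds_def)
  qed
  ultimately show ?thesis by (auto simp: sat_with_def models_def term_holds_def)
qed

lemma resolve_split:
  assumes res: "\<And>C1 C2 x. P (C1 \<union> {Pos x}) \<Longrightarrow> P (C2 \<union> {Neg x}) \<Longrightarrow> P (C1 \<union> C2)"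
    and K1: "K1 \<subseteq> neg_term (insert (Pos x) T)" "P K1"
    and K2: "K2 \<subseteq> neg_term (insert (Neg x) T)" "P K2"
  shows "\<exists>K \<subseteq> neg_term T. P K"
proof (cases "Neg x \<in> K1 \<and> Pos x \<in> K2")
  case True
  then have "P ((K2 - {Pos x}) \<union> (K1 - {Neg x}))"
    using res[of "K2 - {Pos x}" x "K1 - {Neg x}"] K1(2) K2(2) by (simp add: insert_absorb)
  moreover have "(K2 - {Pos x}) \<union> (K1 - {Neg x}) \<subseteq> neg_term T"
    using K1(1) K2(1) by (auto simp: neg_term_insert)
  ultimately show ?thesis by blast
next
  case False
  then have "K1 \<subseteq> neg_term T \<or> K2 \<subseteq> neg_term T"
    using K1(1) K2(1) by (auto simp: neg_term_insert)
  then show ?thesis using K1(2) K2(2) by blast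
qed

lemma resolution_derives_subclause_of_neg_term:
  assumes res: "\<And>C1 C2 x. P (C1 \<union> {Pos x}) \<Longrightarrow> P (C2 \<union> {Neg x}) \<Longrightarrow> P (C1 \<union> C2)"
    and derivable: "\<forall>C\<in>S. P C"
    and "finite W"
    and "\<forall>C\<in>S. \<forall>l\<in>C. lvar l \<in> W \<or> l \<in> T \<or> lneg l \<in> T"
    and "sat_with {} T"
    and "\<not> sat_with S T"
  shows "\<exists>K \<subseteq> neg_term T. P K"
  using \<open>finite W\<close> assms(4-6)
proof (induction W arbitrary: T)
  case empty
  obtain lam where lam: "term_holds lam T"
    using empty.prems(2) by (auto simp: sat_with_def)
  then obtain C where C: "C \<in> S" "\<forall>l\<in>C. \<not> lholds lam l"
    using empty.prems(3) by (auto simp: sat_with_def models_def)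
  have "l \<in> neg_term T" if "l \<in> C" for l
  proof -
    have "l \<notin> T" using lam C(2) that by (auto simp: term_holds_def)
    then have "lneg l \<in> T" using empty.prems(1) C(1) that by blast
    then show ?thesis unfolding neg_term_def by (metis image_eqI lneg_lneg)
  qed
  then show ?case using C(1) derivable by blast
next
  case (insert x W)
  show ?case
  proof (cases "Pos x \<in> T \<or> Neg x \<in> T")
    case True
    have "lvar l \<in> W \<or> l \<in> T \<or> lneg l \<in> T" if "C \<in> S" "l \<in> C" for C l
      using insert.prems(1)[rule_format, OF that] True by (cases l) auto
    then show ?thesis using insert.IH[OF _ insert.prems(2,3)] by blast
  next
    case False
    have "\<exists>K \<subseteq> neg_term (insert l T). P K" if "lvar l = x" for l
    proof (rule insert.IH)
      have "l' \<in> insert l T \<or> lneg l' \<in> insert l T" if "lvar l' = x" for l'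
        using \<open>lvar l = x\<close> that by (cases l; cases l') auto
      then show "\<forall>C\<in>S. \<forall>l'\<in>C. lvar l' \<in> W \<or> l' \<in> insert l T \<or> lneg l' \<in> insert l T"
        using insert.prems(1) by blast
      show "sat_with {} (insert l T)"
        using sat_with_insert_fresh[OF insert.prems(2)] False that by blast
      show "\<not> sat_with S (insert l T)"
        using not_sat_with_insert[OF insert.prems(3)] .
    qed
    then obtain K\<^sub>1 K\<^sub>2 where "K\<^sub>1 \<subseteq> neg_term (insert (Pos x) T)" "P K\<^sub>1"
      and "K\<^sub>2 \<subseteq> neg_term (insert (Neg x) T)" "P K\<^sub>2"
      by (metis lvar.simps)
    with res show ?thesis by (rule resolve_split)
  qed
qed

definition expansion_axioms ::
    "'v set \<Rightarrow> 'v list \<Rightarrow> ('v \<Rightarrow> 'v set) \<Rightarrow> 'v lit set set \<Rightarrow> ('v \<rightharpoonup> bool) \<Rightarrow> 'v var lit set set" where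
  "expansion_axioms U es D \<phi> \<sigma> =
     (\<lambda>C. {ann_lit l (\<sigma> |` D (lvar l)) | l. l \<in> C \<and> lvar l \<in> set es})
       ` {C \<in> \<phi>. \<forall>l\<in>C. lvar l \<in> U \<longrightarrow> pholds \<sigma> (lneg l)}"

lemma expres_derivable_expansion_axioms:
  "dom \<sigma> = U \<Longrightarrow> K \<in> expansion_axioms U es D \<phi> \<sigma> \<Longrightarrow> expres_derivable U es D \<phi> K"
  by (auto simp: expansion_axioms_def intro: expres_derivable.axiom)

lemma finite_vars_expansion_axioms:
  assumes "finite \<phi>" and "\<forall>C\<in>\<phi>. finite C"
  shows "finite (lvar ` \<Union> (expansion_axioms U es D \<phi> \<sigma>))"
proof -
  have "{ann_lit l (\<sigma> |` D (lvar l)) | l. l \<in> C \<and> lvar l \<in> set es}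
      = (\<lambda>l. ann_lit l (\<sigma> |` D (lvar l))) ` {l \<in> C. lvar l \<in> set es}" for C
    by auto
  then show ?thesis using assms by (simp add: expansion_axioms_def)
qed

lemma models_lift_cnf_from_expansion_axioms:
  assumes universal: "\<forall>u\<in>U. \<sigma> u = Some (\<nu> (Orig u))"
    and existential: "\<forall>e\<in>set es. \<nu> (Orig e) = \<mu> (Ann e (\<sigma> |` D e))"
    and "models \<mu> (expansion_axioms U es D \<phi> \<sigma>)"
  shows "models \<nu> (lift_cnf \<phi>)"
  unfolding models_def lift_cnf_def
proof
  fix C' assume "C' \<in> (\<lambda>C. map_lit Orig ` C) ` \<phi>"
  then obtain C where C: "C \<in> \<phi>" "C' = map_lit Orig ` C" by blast
  show "\<exists>l\<in>C'. lholds \<nu> l"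
  proof (cases "\<forall>l\<in>C. lvar l \<in> U \<longrightarrow> pholds \<sigma> (lneg l)")
    case False
    then obtain l where l: "l \<in> C" "lvar l \<in> U" "\<not> pholds \<sigma> (lneg l)" by blast
    then have "lholds \<nu> (map_lit Orig l)"
      using universal by (cases l) auto
    then show ?thesis using C l(1) by blast
  next
    case True
    then obtain l where l: "l \<in> C" "lvar l \<in> set es" "lholds \<mu> (ann_lit l (\<sigma> |` D (lvar l)))"
      using C(1) assms(3) by (auto simp: models_def expansion_axioms_def)
    then have "lholds \<nu> (map_lit Orig l)"
      using existential by (cases l) (auto simp: ann_lit_def)
    then show ?thesis using C l(1) by blast
  qed
qed

lemma models_arbiter_clauses:
  assumes "dom s = D e"
    and universal: "\<forall>u\<in>D e. \<sigma> u = Some (\<nu> (Orig u))"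
    and "\<nu> (Orig e) = \<nu> (Ann e (\<sigma> |` D e))"
  shows "models \<nu> (arbiter_clauses e s)"
proof (cases "s = \<sigma> |` D e")
  case True
  then show ?thesis
    using assms(3) by (auto simp: models_def arbiter_clauses_def)
next
  case False
  then obtain u where "s u \<noteq> (\<sigma> |` D e) u"
    by auto
  then have u: "u \<in> D e" "s u \<noteq> \<sigma> u"
    using assms(1) by (metis domIff restrict_in restrict_out)+
  moreover obtain b where "s u = Some b"
    using u(1) assms(1) by blast
  ultimately have b: "s u = Some b" "b \<noteq> \<nu> (Orig u)"
    using universal by auto
  define l where "l = (if b then Pos u else Neg u)"
  have "lneg (map_lit Orig l) \<in> neg_term (map_lit Orig ` term_of s)"
    using b(1) by (auto simp: l_def term_of_def neg_term_def)
  moreover have "lholds \<nu> (lneg (map_lit Orig l))"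
    using b(2) by (auto simp: l_def)
  ultimately show ?thesis
    unfolding models_def arbiter_clauses_def by blast
qed

lemma phase1_arbiter_vars:
  "phase1 U es D \<phi> i A FA ds \<Longrightarrow> a \<in> A \<Longrightarrow> \<exists>e s. a = Ann e s"
  by (induction rule: phase1.induct) auto

lemma phase1_arbiter_clauses:
  "phase1 U es D \<phi> i A FA ds \<Longrightarrow> F \<in> FA
     \<Longrightarrow> \<exists>e s. e \<in> set es \<and> dom s = D e \<and> F \<in> arbiter_clauses e s"
proof (induction rule: phase1.induct)
  case (arb i A FA ds \<xi> \<sigma>)
  have "dom \<sigma> = D (es!i)"
    using arb.hyps(4,7) by (auto simp: dom_def restrict_map_def)
  from arb.prems consider "F \<in> FA" | "F \<in> arbiter_clauses (es!i) \<sigma>" by blast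
  then show ?case
  proof cases
    case 1
    then show ?thesis by (rule arb.IH)
  next
    case 2
    then show ?thesis using \<open>dom \<sigma> = D (es!i)\<close> nth_mem[OF arb.hyps(2)] by blast
  qed
qed auto

lemma phase2_dom: "phase2 U es \<phi> A FA ds \<tau> C \<Longrightarrow> dom \<tau> = A"
  by (induction rule: phase2.induct) (auto simp: dom_def)

lemma expansion_axioms_refute_arbiter_literals:
  assumes "dqbf U es D \<phi>" and phase1: "phase1 U es D \<phi> i A FA ds" and "dom \<tau> = A"
    and \<rho>: "\<rho> \<subseteq> term_of \<tau> \<union> term_on lam (Orig ` U)"
    and unsat: "\<not> sat_with (lift_cnf \<phi> \<union> FA) \<rho>"
  defines "\<sigma> \<equiv> (\<lambda>u. Some (lam (Orig u))) |` U"
  shows "\<not> sat_with (expansion_axioms U es D \<phi> \<sigma>) {l \<in> \<rho>. lvar l \<in> A}"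
proof
  assume "sat_with (expansion_axioms U es D \<phi> \<sigma>) {l \<in> \<rho>. lvar l \<in> A}"
  then obtain \<mu> where \<mu>: "models \<mu> (expansion_axioms U es D \<phi> \<sigma>)"
      "term_holds \<mu> {l \<in> \<rho>. lvar l \<in> A}"
    by (auto simp: sat_with_def)
  define \<nu> where "\<nu> v = (case v of
      Orig x \<Rightarrow> if x \<in> U then lam (Orig x) else \<mu> (Ann x (\<sigma> |` D x))
    | Ann e s \<Rightarrow> \<mu> (Ann e s))" for v
  have disjoint: "set es \<inter> U = {}" and deps: "\<forall>e\<in>set es. D e \<subseteq> U"
    using assms(1) by (auto simp: dqbf_def)
  have universal: "\<forall>u\<in>U. \<sigma> u = Some (\<nu> (Orig u))"
    by (simp add: \<sigma>_def \<nu>_def)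
  have existential: "\<forall>e\<in>set es. \<nu> (Orig e) = \<mu> (Ann e (\<sigma> |` D e))"
    using disjoint by (auto simp: \<nu>_def)
  have "models \<nu> FA"
    unfolding models_def
  proof
    fix F assume "F \<in> FA"
    then obtain e s where e: "e \<in> set es" and "dom s = D e" "F \<in> arbiter_clauses e s"
      using phase1_arbiter_clauses[OF phase1] by blast
    moreover have "\<forall>u\<in>D e. \<sigma> u = Some (\<nu> (Orig u))"
      using universal deps e by blast
    moreover have "\<nu> (Orig e) = \<nu> (Ann e (\<sigma> |` D e))"
      using existential e by (simp add: \<nu>_def)
    ultimately show "\<exists>l\<in>F. lholds \<nu> l"
      using models_arbiter_clauses by (metis models_def)
  qed
  moreover have "lholds \<nu> l" if "l \<in> \<rho>" for l
  proof (cases "lvar l \<in> A")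
    case True
    then obtain e s where "lvar l = Ann e s"
      using phase1_arbiter_vars[OF phase1] by blast
    moreover have "lholds \<mu> l"
      using \<mu>(2) \<open>l \<in> \<rho>\<close> True by (auto simp: term_holds_def)
    ultimately show ?thesis using lholds_cong[of \<nu> l \<mu>] by (simp add: \<nu>_def)
  next
    case False
    then have "l \<notin> term_of \<tau>"
      using \<open>dom \<tau> = A\<close> by (cases l) (auto simp: term_of_def)
    then have "l \<in> term_on lam (Orig ` U)"
      using \<rho> \<open>l \<in> \<rho>\<close> by blast
    then obtain u where "lvar l = Orig u" "u \<in> U" "lholds lam l"
      by (auto simp: term_on_def)
    then show ?thesis using lholds_cong[of \<nu> l lam] by (simp add: \<nu>_def)
  qed
  moreover have "models \<nu> (lift_cnf \<phi>)"
    using models_lift_cnf_from_expansion_axioms[OF universal existential \<mu>(1)] .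
  ultimately have "sat_with (lift_cnf \<phi> \<union> FA) \<rho>"
    unfolding sat_with_def models_def term_holds_def by blast
  with unsat show False by contradiction
qed

theorem proposition1:
  assumes "dqbf U es D \<phi>"
    and "phase1 U es D \<phi> (length es) A FA ds"
    and "phase2 U es \<phi> A FA ds \<tau> C"
    and "phase2_clause U es \<phi> A FA ds \<tau> K"
  shows "\<exists>K'\<subseteq>K. expres_derivable U es D \<phi> K'"
proof -
  obtain lam \<rho> where lam: "term_holds lam (term_of \<tau>)"
      and \<rho>: "\<rho> \<subseteq> term_of \<tau> \<union> term_on lam (Orig ` U)"
      and unsat: "\<not> sat_with (lift_cnf \<phi> \<union> FA) \<rho>"
      and K: "K = neg_term {l \<in> \<rho>. lvar l \<in> A}"
    using assms(4) unfolding phase2_clause_def by blast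
  define \<sigma> where "\<sigma> = (\<lambda>u. Some (lam (Orig u))) |` U"
  have "\<exists>K'\<subseteq>neg_term {l \<in> \<rho>. lvar l \<in> A}. expres_derivable U es D \<phi> K'"
  proof (rule resolution_derives_subclause_of_neg_term)
    show "finite (lvar ` \<Union> (expansion_axioms U es D \<phi> \<sigma>))"
      using assms(1) by (intro finite_vars_expansion_axioms) (simp_all add: dqbf_def)
    show "\<forall>C\<in>expansion_axioms U es D \<phi> \<sigma>. \<forall>l\<in>C. lvar l \<in> lvar ` \<Union> (expansion_axioms U es D \<phi> \<sigma>)
        \<or> l \<in> {l \<in> \<rho>. lvar l \<in> A} \<or> lneg l \<in> {l \<in> \<rho>. lvar l \<in> A}"
      by blast
    show "\<forall>C\<in>expansion_axioms U es D \<phi> \<sigma>. expres_derivable U es D \<phi> C"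
      using expres_derivable_expansion_axioms[of \<sigma> U] by (simp add: \<sigma>_def)
    show "sat_with {} {l \<in> \<rho>. lvar l \<in> A}"
      using lam \<rho> by (auto simp: sat_with_def models_def term_holds_def term_on_def)
    show "\<not> sat_with (expansion_axioms U es D \<phi> \<sigma>) {l \<in> \<rho>. lvar l \<in> A}"
      unfolding \<sigma>_def
      by (rule expansion_axioms_refute_arbiter_literals[OF assms(1,2) phase2_dom[OF assms(3)] \<rho> unsat])
  qed (rule expres_derivable.res)
  then show ?thesis using K by simp
qed

end
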